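(* Let $\mathcal{F}=\{f_i\}_{i=1}^N$ be a frame for $\mathbb{R}^n$ and $\Lambda\subseteq\{1,\dots,N\}$. If $\ker(\Theta_{L(\mathcal{F}_\Lambda)})\cap\mathcal{S}_2=\ker(\Theta_{L(\mathcal{F})})\cap\mathcal{S}_2$, then a subspace $M$ of $\mathbb{R}^n$ is an $\mathcal{F}$-PR subspace if and only if it is an $\mathcal{F}_\Lambda$-PR subspace. Consequently, $M$ is a maximal $\mathcal{F}$-PR subspace if and only if it is a maximal $\mathcal{F}_\Lambda$-PR subspace.
   Context: A frame for $\mathbb{R}^n$ is a finite spanning sequence; $\mathcal{F}_\Lambda=\{f_i\}_{i\in\Lambda}$. $\mathcal{S}_2$ is the set of real symmetric $n\times n$ matrices of rank at most $2$, and $\Theta_{L(\mathcal{F}_\Lambda)}(A)=(f_i^TAf_i)_{i\in\Lambda}$ for symmetric $A$. For a finite sequence $\mathcal{G}=\{g_i\}$ in $\mathbb{R}^n$, a subspace $M$ is a $\mathcal{G}$-PR subspace if $\{P_Mg_i\}$ (with $P_M$ the orthogonal projection onto $M$) spans $M$ and whenever $x,y\in M$ satisfy $|\langle x,P_Mg_i\rangle|=|\langle y,P_Mg_i\rangle|$ for all $i$, then $x=\pm y$. It is maximal if it is not a proper subspace of another $\mathcal{G}$-PR subspace. *)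

theory Defs
  imports "HOL-Analysis.Analysis"
begin

definition proj_onto :: "(real^'n) set \<Rightarrow> real^'n \<Rightarrow> real^'n" where
  "proj_onto M x = (THE p. p \<in> M \<and> (\<forall>y\<in>M. (x - p) \<bullet> y = 0))"

definition S2 :: "(real^'n^'n) set" where
  "S2 = {A. transpose A = A \<and> rank A \<le> 2}"

definition Theta :: "(nat \<Rightarrow> real^'n) \<Rightarrow> nat set \<Rightarrow> real^'n^'n \<Rightarrow> nat \<Rightarrow> real" where
  "Theta g I A = (\<lambda>i. if i \<in> I then g i \<bullet> (A *v g i) else 0)"

definition ker_Theta :: "(nat \<Rightarrow> real^'n) \<Rightarrow> nat set \<Rightarrow> (real^'n^'n) set" where
  "ker_Theta g I = {A. transpose A = A \<and> Theta g I A = (\<lambda>_. 0)}"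

definition is_frame :: "(nat \<Rightarrow> real^'n) \<Rightarrow> nat set \<Rightarrow> bool" where
  "is_frame g I \<longleftrightarrow> finite I \<and> span (g ` I) = UNIV"

definition PR_subspace :: "(nat \<Rightarrow> real^'n) \<Rightarrow> nat set \<Rightarrow> (real^'n) set \<Rightarrow> bool" where
  "PR_subspace g I M \<longleftrightarrow> subspace M \<and>
     span ((\<lambda>i. proj_onto M (g i)) ` I) = M \<and>
     (\<forall>x\<in>M. \<forall>y\<in>M. (\<forall>i\<in>I. \<bar>x \<bullet> proj_onto M (g i)\<bar> = \<bar>y \<bullet> proj_onto M (g i)\<bar>)
        \<longrightarrow> x = y \<or> x = - y)"

definition max_PR_subspace :: "(nat \<Rightarrow> real^'n) \<Rightarrow> nat set \<Rightarrow> (real^'n) set \<Rightarrow> bool" where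
  "max_PR_subspace g I M \<longleftrightarrow> PR_subspace g I M \<and>
     \<not> (\<exists>M'. PR_subspace g I M' \<and> M \<subset> M')"

end

theory Submission
  imports Defs
begin

text \<open>
  For a subspace M and x \<in> M one has x \<bullet> P_M g = x \<bullet> g, so whether M is a G-PR subspace only
  depends on which pairs x, y \<in> M satisfy |x \<bullet> g_i| = |y \<bullet> g_i| for all i; the spanning condition
  is automatic, since a nonzero x \<in> M orthogonal to all P_M g_i would be indistinguishable from 0.
  Moreover |x \<bullet> g_i| = |y \<bullet> g_i| for all i \<in> I says exactly that the symmetric matrix
  x x^T - y y^T, whose rank is at most 2, lies in the kernel of Theta for G_I. Hence equality of the
  two kernels on S_2 makes the measurement relations of F and F_\<Lambda> coincide, and with them the
  (maximal) PR subspaces.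
\<close>

lemma proj_onto_characterization:
  fixes M :: "(real^'n) set"
  assumes "subspace M"
  shows "proj_onto M g \<in> M \<and> (\<forall>y\<in>M. (g - proj_onto M g) \<bullet> y = 0)"
proof -
  obtain p z where p: "p \<in> span M" "\<And>w. w \<in> span M \<Longrightarrow> orthogonal z w" "g = p + z"
    using orthogonal_subspace_decomp_exists by blast
  have "p \<in> M"
    using p(1) assms by (metis span_eq_iff)
  then have ex: "p \<in> M \<and> (\<forall>y\<in>M. (g - p) \<bullet> y = 0)"
    using p(2,3) by (auto simp: orthogonal_def span_base)
  have uniq: "q = p" if "q \<in> M \<and> (\<forall>y\<in>M. (g - q) \<bullet> y = 0)" for q
  proof -
    have "p - q \<in> M"
      using that \<open>p \<in> M\<close> assms by (simp add: subspace_diff)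
    then have "(g - q) \<bullet> (p - q) = 0" "(g - p) \<bullet> (p - q) = 0"
      using that ex by auto
    then have "(p - q) \<bullet> (p - q) = 0"
      by (simp add: algebra_simps inner_diff_left inner_diff_right)
    then show ?thesis by simp
  qed
  have "proj_onto M g = p"
    unfolding proj_onto_def using ex uniq by (rule the_equality)
  with ex show ?thesis by simp
qed

lemma inner_proj_onto:
  fixes M :: "(real^'n) set"
  assumes "subspace M" "x \<in> M"
  shows "x \<bullet> proj_onto M g = x \<bullet> g"
proof -
  have "(g - proj_onto M g) \<bullet> x = 0"
    using proj_onto_characterization[OF assms(1)] assms(2) by auto
  then show ?thesis
    by (simp add: inner_diff_left inner_diff_right inner_commute)
qed

lemma PR_subspace_iff:
  "PR_subspace g I M \<longleftrightarrow> subspace M \<and>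
     (\<forall>x\<in>M. \<forall>y\<in>M. (\<forall>i\<in>I. \<bar>x \<bullet> g i\<bar> = \<bar>y \<bullet> g i\<bar>) \<longrightarrow> x = y \<or> x = - y)"
  (is "_ \<longleftrightarrow> subspace M \<and> ?retrieval")
proof (cases "subspace M")
  case True
  let ?P = "(\<lambda>i. proj_onto M (g i)) ` I"
  have retrieval_proj_iff:
    "(\<forall>x\<in>M. \<forall>y\<in>M. (\<forall>i\<in>I. \<bar>x \<bullet> proj_onto M (g i)\<bar> = \<bar>y \<bullet> proj_onto M (g i)\<bar>)
        \<longrightarrow> x = y \<or> x = - y) \<longleftrightarrow> ?retrieval"
    using True by (simp add: inner_proj_onto)
  have span_M: "span M = M"
    using True by (rule span_eq_iff[THEN iffD2])
  have spanning: "span ?P = M" if ?retrieval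
  proof (rule ccontr)
    assume "span ?P \<noteq> M"
    moreover have "span ?P \<subseteq> M"
      using proj_onto_characterization[OF True] span_M by (metis image_subsetI span_mono)
    ultimately have "span ?P \<subset> span M"
      using span_M by blast
    then obtain x where x: "x \<noteq> 0" "x \<in> M" "\<And>y. y \<in> span ?P \<Longrightarrow> orthogonal x y"
      using orthogonal_to_subspace_exists_gen span_M by metis
    have "x \<bullet> g i = 0" if "i \<in> I" for i
      using x(3)[of "proj_onto M (g i)"] that inner_proj_onto[OF True x(2)]
      by (simp add: orthogonal_def span_base)
    then have "\<forall>i\<in>I. \<bar>x \<bullet> g i\<bar> = \<bar>0 \<bullet> g i\<bar>"
      by simp
    moreover have "0 \<in> M"
      using True by (rule subspace_0)
    ultimately have "x = 0 \<or> x = - 0"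
      using \<open>?retrieval\<close> x(2) by blast
    with x(1) show False by simp
  qed
  show ?thesis
    unfolding PR_subspace_def using True retrieval_proj_iff spanning by blast
qed (simp add: PR_subspace_def)

definition outer_diff :: "real^'n \<Rightarrow> real^'n \<Rightarrow> real^'n^'n" where
  "outer_diff x y = (\<chi> i j. x$i * x$j - y$i * y$j)"

lemma outer_diff_mult: "outer_diff x y *v v = (x \<bullet> v) *\<^sub>R x - (y \<bullet> v) *\<^sub>R y"
  by (simp add: vec_eq_iff outer_diff_def matrix_vector_mult_def inner_vec_def
      sum_distrib_left sum_subtractf algebra_simps)

lemma transpose_outer_diff: "transpose (outer_diff x y) = outer_diff x y"
  by (simp add: vec_eq_iff outer_diff_def transpose_def)

lemma outer_diff_in_S2: "outer_diff x y \<in> S2"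
proof -
  have "range (\<lambda>v. outer_diff x y *v v) \<subseteq> span {x, y}"
    unfolding outer_diff_mult by (auto intro!: span_diff span_mul simp: span_base)
  then have "dim (range (\<lambda>v. outer_diff x y *v v)) \<le> card {x, y}"
    by (intro dim_le_card) auto
  also have "\<dots> \<le> 2"
    by (simp add: card_insert_if)
  finally show ?thesis
    by (simp add: S2_def rank_dim_range transpose_outer_diff)
qed

lemma outer_diff_in_ker_Theta_iff:
  "outer_diff x y \<in> ker_Theta g I \<longleftrightarrow> (\<forall>i\<in>I. \<bar>x \<bullet> g i\<bar> = \<bar>y \<bullet> g i\<bar>)"
proof -
  have "g i \<bullet> (outer_diff x y *v g i) = (x \<bullet> g i)\<^sup>2 - (y \<bullet> g i)\<^sup>2" for i
    by (simp add: outer_diff_mult inner_diff_right power2_eq_square inner_commute)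
  moreover have "\<bar>a\<bar> = \<bar>b\<bar> \<longleftrightarrow> a\<^sup>2 - b\<^sup>2 = 0" for a b :: real
    by (metis abs_le_square_iff eq_iff_diff_eq_0 order_antisym order_refl)
  ultimately show ?thesis
    by (auto simp: ker_Theta_def Theta_def fun_eq_iff transpose_outer_diff)
qed

lemma same_measurements_if_ker_Theta_S2_eq:
  assumes "ker_Theta g I \<inter> S2 = ker_Theta g J \<inter> S2"
  shows "(\<forall>i\<in>I. \<bar>x \<bullet> g i\<bar> = \<bar>y \<bullet> g i\<bar>) \<longleftrightarrow> (\<forall>i\<in>J. \<bar>x \<bullet> g i\<bar> = \<bar>y \<bullet> g i\<bar>)"
  using assms outer_diff_in_S2[of x y] outer_diff_in_ker_Theta_iff[of x y g] by blast

lemma PR_subspace_eq_if_ker_Theta_S2_eq: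
  assumes "ker_Theta g I \<inter> S2 = ker_Theta g J \<inter> S2"
  shows "PR_subspace g I = PR_subspace g J"
  using same_measurements_if_ker_Theta_S2_eq[OF assms] by (simp add: fun_eq_iff PR_subspace_iff)

theorem lemma3p5:
  fixes f :: "nat \<Rightarrow> real^'n" and N :: nat and \<Lambda> :: "nat set"
  assumes "is_frame f {1..N}"
    and "\<Lambda> \<subseteq> {1..N}"
    and "ker_Theta f \<Lambda> \<inter> S2 = ker_Theta f {1..N} \<inter> S2"
  shows "(\<forall>M. subspace M \<longrightarrow> (PR_subspace f {1..N} M \<longleftrightarrow> PR_subspace f \<Lambda> M))
    \<and> (\<forall>M. subspace M \<longrightarrow> (max_PR_subspace f {1..N} M \<longleftrightarrow> max_PR_subspace f \<Lambda> M))"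
proof -
  have "PR_subspace f {1..N} = PR_subspace f \<Lambda>"
    using PR_subspace_eq_if_ker_Theta_S2_eq[OF assms(3)] by simp
  then show ?thesis
    by (simp add: max_PR_subspace_def)
qed

end
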